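(* If $G$ is a graph of order $n\ge 7$ having at least one vertex $u$ with $3\le\deg(u)\le n-4$, then $\beta_p(G)\le n-3$.
   Context: All graphs are finite, simple, undirected and connected. For a partition $\Pi=\{S_1,\dots,S_m\}$ of $V(G)$, $r(u|\Pi)=(d(u,S_1),\dots,d(u,S_m))$ with $d(u,S)=\min_{w\in S}d(u,w)$; $\Pi$ is locating if $r(u|\Pi)\ne r(v|\Pi)$ for all distinct $u,v$; $\beta_p(G)$ is the minimum size of a locating partition. *)

theory Defs
  imports Main
begin

definition simple_graph :: "'a set \<Rightarrow> ('a \<Rightarrow> 'a \<Rightarrow> bool) \<Rightarrow> bool" where
  "simple_graph V E \<longleftrightarrow> finite V \<and> V \<noteq> {} \<and>
     (\<forall>u v. E u v \<longrightarrow> u \<in> V \<and> v \<in> V) \<and>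
     (\<forall>u v. E u v \<longrightarrow> E v u) \<and> (\<forall>u. \<not> E u u)"

fun is_walk :: "('a \<Rightarrow> 'a \<Rightarrow> bool) \<Rightarrow> 'a list \<Rightarrow> bool" where
  "is_walk E [] = False"
| "is_walk E [x] = True"
| "is_walk E (x # y # xs) = (E x y \<and> is_walk E (y # xs))"

definition walk_between :: "'a set \<Rightarrow> ('a \<Rightarrow> 'a \<Rightarrow> bool) \<Rightarrow> 'a \<Rightarrow> 'a \<Rightarrow> 'a list \<Rightarrow> bool" where
  "walk_between V E u v xs \<longleftrightarrow> is_walk E xs \<and> set xs \<subseteq> V \<and> hd xs = u \<and> last xs = v"

definition connected_graph :: "'a set \<Rightarrow> ('a \<Rightarrow> 'a \<Rightarrow> bool) \<Rightarrow> bool" where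
  "connected_graph V E \<longleftrightarrow> simple_graph V E \<and>
     (\<forall>u\<in>V. \<forall>v\<in>V. \<exists>xs. walk_between V E u v xs)"

definition gdist :: "'a set \<Rightarrow> ('a \<Rightarrow> 'a \<Rightarrow> bool) \<Rightarrow> 'a \<Rightarrow> 'a \<Rightarrow> nat" where
  "gdist V E u v = (LEAST k. \<exists>xs. walk_between V E u v xs \<and> length xs = Suc k)"

definition set_dist :: "'a set \<Rightarrow> ('a \<Rightarrow> 'a \<Rightarrow> bool) \<Rightarrow> 'a \<Rightarrow> 'a set \<Rightarrow> nat" where
  "set_dist V E u S = Min ((\<lambda>w. gdist V E u w) ` S)"

definition degree :: "'a set \<Rightarrow> ('a \<Rightarrow> 'a \<Rightarrow> bool) \<Rightarrow> 'a \<Rightarrow> nat" where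
  "degree V E u = card {v \<in> V. E u v}"

definition is_partition :: "'a set \<Rightarrow> 'a set set \<Rightarrow> bool" where
  "is_partition V P \<longleftrightarrow> (\<Union>P = V) \<and> {} \<notin> P \<and>
     (\<forall>S\<in>P. \<forall>T\<in>P. S \<noteq> T \<longrightarrow> S \<inter> T = {})"

text \<open>Locating: distinct vertices have distinct representation vectors, i.e. some class
  distinguishes them (the ordering of the classes is irrelevant).\<close>
definition locating_partition :: "'a set \<Rightarrow> ('a \<Rightarrow> 'a \<Rightarrow> bool) \<Rightarrow> 'a set set \<Rightarrow> bool" where
  "locating_partition V E P \<longleftrightarrow> is_partition V P \<and>
     (\<forall>u\<in>V. \<forall>v\<in>V. u \<noteq> v \<longrightarrow>
        (\<exists>S\<in>P. set_dist V E u S \<noteq> set_dist V E v S))"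

definition partition_dim :: "'a set \<Rightarrow> ('a \<Rightarrow> 'a \<Rightarrow> bool) \<Rightarrow> nat" where
  "partition_dim V E = (LEAST m. \<exists>P. locating_partition V E P \<and> card P = m)"

end

theory Submission
  imports Defs
begin

text \<open>Let \<open>u\<close> have \<open>k\<close> neighbours and at least \<open>k\<close> non-neighbours other than itself. Matching
  \<open>k\<close> neighbours with \<open>k\<close> non-neighbours into pairs and keeping every other vertex as a
  singleton gives a partition with \<open>n - k\<close> classes. It is locating: vertices in different
  classes are told apart by the class of one of them (distance 0 versus positive), and the
  two vertices of a pair by the singleton \<open>{u}\<close> (distance 1 versus not 1). With
  \<open>3 \<le> deg u \<le> n - 4\<close> one can take \<open>k = 3\<close>.\<close>

lemma gdist_shortest_walk:
  assumes "connected_graph V E" "a \<in> V" "b \<in> V"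
  obtains xs where "walk_between V E a b xs" "length xs = Suc (gdist V E a b)"
proof -
  obtain xs where xs: "walk_between V E a b xs"
    using assms unfolding connected_graph_def by blast
  then obtain k where "length xs = Suc k"
    unfolding walk_between_def by (cases xs) auto
  with xs have "\<exists>k xs. walk_between V E a b xs \<and> length xs = Suc k" by blast
  then have "\<exists>xs. walk_between V E a b xs \<and> length xs = Suc (gdist V E a b)"
    unfolding gdist_def by (rule LeastI_ex)
  then show thesis using that by blast
qed

lemma gdist_le_walk:
  assumes "walk_between V E a b xs" "length xs = Suc k"
  shows "gdist V E a b \<le> k"
  unfolding gdist_def using assms by (intro Least_le) blast

lemma gdist_eq_0_iff:
  assumes "connected_graph V E" "a \<in> V" "b \<in> V"
  shows "gdist V E a b = 0 \<longleftrightarrow> a = b"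
proof
  assume "gdist V E a b = 0"
  then obtain xs where "walk_between V E a b xs" "length xs = Suc 0"
    using gdist_shortest_walk[OF assms] by metis
  then show "a = b" unfolding walk_between_def by (cases xs) auto
next
  assume "a = b"
  then have "walk_between V E a b [a]" using assms(2) by (simp add: walk_between_def)
  then show "gdist V E a b = 0" using gdist_le_walk[of V E a b "[a]" 0] by simp
qed

lemma gdist_eq_1_iff:
  assumes "connected_graph V E" "a \<in> V" "b \<in> V"
  shows "gdist V E a b = 1 \<longleftrightarrow> E a b"
proof
  assume "gdist V E a b = 1"
  then obtain xs where "walk_between V E a b xs" "length xs = Suc (Suc 0)"
    using gdist_shortest_walk[OF assms] by (metis One_nat_def)
  then show "E a b" unfolding walk_between_def by (auto simp: length_Suc_conv)
next
  assume ab: "E a b"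
  then have "a \<noteq> b"
    using assms(1) unfolding connected_graph_def simple_graph_def by blast
  then have "gdist V E a b \<noteq> 0" using gdist_eq_0_iff[OF assms] by blast
  moreover have "walk_between V E a b [a, b]"
    using ab assms(2,3) by (simp add: walk_between_def)
  then have "gdist V E a b \<le> 1" using gdist_le_walk[of V E a b "[a, b]" 1] by simp
  ultimately show "gdist V E a b = 1" by simp
qed

lemma set_dist_singleton: "set_dist V E v {u} = gdist V E v u"
  by (simp add: set_dist_def)

lemma set_dist_eq_0_iff:
  assumes "connected_graph V E" "finite S" "S \<subseteq> V" "S \<noteq> {}" "w \<in> V"
  shows "set_dist V E w S = 0 \<longleftrightarrow> w \<in> S"
proof -
  have "set_dist V E w S \<in> (\<lambda>s. gdist V E w s) ` S"
    unfolding set_dist_def using assms(2,4) by (intro Min_in) auto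
  moreover have "w \<in> S \<Longrightarrow> set_dist V E w S \<le> gdist V E w w"
    unfolding set_dist_def using assms(2) by (intro Min_le) auto
  ultimately show ?thesis
    using gdist_eq_0_iff[OF assms(1) assms(5)] assms(3,5) by fastforce
qed

lemma locating_partitionI:
  assumes conn: "connected_graph V E" and part: "is_partition V P"
    and separated: "\<And>S v w. S \<in> P \<Longrightarrow> v \<in> S \<Longrightarrow> w \<in> S \<Longrightarrow> v \<noteq> w \<Longrightarrow>
                       \<exists>T\<in>P. set_dist V E v T \<noteq> set_dist V E w T"
  shows "locating_partition V E P"
  unfolding locating_partition_def
proof (intro conjI part ballI impI)
  fix v w assume vw: "v \<in> V" "w \<in> V" "v \<noteq> w"
  obtain S where S: "S \<in> P" "v \<in> S"
    using part vw(1) unfolding is_partition_def by blast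
  show "\<exists>T\<in>P. set_dist V E v T \<noteq> set_dist V E w T"
  proof (cases "w \<in> S")
    case True
    then show ?thesis using separated S vw(3) by blast
  next
    case False
    have "finite V" using conn unfolding connected_graph_def simple_graph_def by blast
    moreover have "S \<subseteq> V" "S \<noteq> {}" using part S unfolding is_partition_def by blast+
    ultimately have "set_dist V E v S = 0" "set_dist V E w S \<noteq> 0"
      using set_dist_eq_0_iff[OF conn, of S] S(2) False vw(1,2) finite_subset by blast+
    then show ?thesis using S(1) by metis
  qed
qed

lemma partition_dim_le:
  assumes "locating_partition V E P"
  shows "partition_dim V E \<le> card P"
  unfolding partition_dim_def using assms by (intro Least_le) blast

definition matching_partition :: "'a set \<Rightarrow> 'a set \<Rightarrow> ('a \<Rightarrow> 'a) \<Rightarrow> 'a set set" where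
  "matching_partition V A f = (\<lambda>a. {a, f a}) ` A \<union> (\<lambda>v. {v}) ` (V - (A \<union> f ` A))"

lemma is_partition_matching_partition:
  assumes "A \<subseteq> V" "f ` A \<subseteq> V" "inj_on f A" "A \<inter> f ` A = {}"
  shows "is_partition V (matching_partition V A f)"
proof -
  let ?R = "V - (A \<union> f ` A)"
  have pairs_disjoint: "{a, f a} \<inter> {b, f b} = {}" if "a \<in> A" "b \<in> A" "a \<noteq> b" for a b
  proof -
    have "f a \<noteq> f b" using that assms(3) by (meson inj_onD)
    moreover have "a \<noteq> f b" "f a \<noteq> b" using that assms(4) by blast+
    ultimately show ?thesis using \<open>a \<noteq> b\<close> by simp
  qed
  have classes_disjoint: "S \<inter> T = {}"
    if S: "S \<in> matching_partition V A f" and T: "T \<in> matching_partition V A f" and "S \<noteq> T"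
    for S T
  proof -
    consider a b where "a \<in> A" "b \<in> A" "S = {a, f a}" "T = {b, f b}"
      | a w where "a \<in> A" "w \<in> ?R" "S = {a, f a}" "T = {w}"
      | v b where "v \<in> ?R" "b \<in> A" "S = {v}" "T = {b, f b}"
      | v w where "v \<in> ?R" "w \<in> ?R" "S = {v}" "T = {w}"
      using S T unfolding matching_partition_def by blast
    then show ?thesis
    proof cases
      case 1
      then have "a \<noteq> b" using \<open>S \<noteq> T\<close> by blast
      then show ?thesis using 1 pairs_disjoint by blast
    next
      case 2
      then show ?thesis by auto
    next
      case 3
      then show ?thesis by auto
    next
      case 4
      then show ?thesis using \<open>S \<noteq> T\<close> by auto
    qed
  qed
  have "\<Union> (matching_partition V A f) = (A \<union> f ` A) \<union> ?R"
    unfolding matching_partition_def by auto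
  also have "\<dots> = V" using assms(1,2) by blast
  finally have "\<Union> (matching_partition V A f) = V" .
  moreover have "{} \<notin> matching_partition V A f"
    unfolding matching_partition_def by auto
  ultimately show ?thesis unfolding is_partition_def using classes_disjoint by blast
qed

lemma card_matching_partition:
  assumes "finite V" "A \<subseteq> V" "f ` A \<subseteq> V" "inj_on f A" "A \<inter> f ` A = {}"
  shows "card (matching_partition V A f) = card V - card A"
proof -
  have finA: "finite A" using assms(1,2) by (rule finite_subset[rotated])
  have "inj_on (\<lambda>a. {a, f a}) A"
  proof (rule inj_onI)
    fix a b assume "a \<in> A" "b \<in> A" "{a, f a} = {b, f b}"
    moreover have "a \<noteq> f b" using \<open>a \<in> A\<close> \<open>b \<in> A\<close> assms(5) by blast
    ultimately show "a = b" by blast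
  qed
  then have pairs: "card ((\<lambda>a. {a, f a}) ` A) = card A" by (rule card_image)
  have matched: "card (A \<union> f ` A) = 2 * card A"
    using finA assms(4,5) by (simp add: card_Un_disjoint card_image)
  moreover have "A \<union> f ` A \<subseteq> V" using assms(2,3) by blast
  ultimately have "2 * card A \<le> card V"
    by (metis assms(1) card_mono)
  have "card ((\<lambda>v. {v}) ` (V - (A \<union> f ` A))) = card (V - (A \<union> f ` A))"
    by (rule card_image) (simp add: inj_on_def)
  also have "\<dots> = card V - 2 * card A"
    using \<open>A \<union> f ` A \<subseteq> V\<close> matched assms(1)
    by (metis card_Diff_subset finite_subset)
  finally have singletons: "card ((\<lambda>v. {v}) ` (V - (A \<union> f ` A))) = card V - 2 * card A" .
  have "{a, f a} \<noteq> {v}" if "a \<in> A" "v \<notin> A" for a v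
    using that by blast
  then have "(\<lambda>a. {a, f a}) ` A \<inter> (\<lambda>v. {v}) ` (V - (A \<union> f ` A)) = {}"
    by blast
  then have "card (matching_partition V A f) = card A + (card V - 2 * card A)"
    unfolding matching_partition_def using finA assms(1) pairs singletons
    by (simp add: card_Un_disjoint)
  then show ?thesis using \<open>2 * card A \<le> card V\<close> by linarith
qed

lemma locating_matching_partition:
  assumes conn: "connected_graph V E" and u: "u \<in> V"
    and A: "A \<subseteq> {v \<in> V. E u v}" and fA: "f ` A \<subseteq> V - insert u {v \<in> V. E u v}"
    and inj: "inj_on f A"
  shows "locating_partition V E (matching_partition V A f)"
proof -
  have sg: "simple_graph V E" using conn by (simp add: connected_graph_def)
  have "u \<notin> A" using A sg unfolding simple_graph_def by blast
  moreover have "u \<notin> f ` A" using fA by blast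
  ultimately have "u \<in> V - (A \<union> f ` A)" using u by blast
  then have uP: "{u} \<in> matching_partition V A f"
    unfolding matching_partition_def by (intro UnI2 imageI)
  have part: "is_partition V (matching_partition V A f)"
    by (rule is_partition_matching_partition) (use A fA inj in blast)+
  show ?thesis
  proof (rule locating_partitionI[OF conn part])
    fix S v w assume "S \<in> matching_partition V A f" "v \<in> S" "w \<in> S" "v \<noteq> w"
    then obtain a where a: "a \<in> A" "S = {a, f a}"
      unfolding matching_partition_def by auto
    have "a \<in> V" "E a u" using a(1) A sg unfolding simple_graph_def by blast+
    then have "gdist V E a u = 1" using gdist_eq_1_iff[OF conn _ u] by blast
    have "f a \<in> V" "\<not> E u (f a)" using a(1) fA by blast+
    then have "\<not> E (f a) u" using sg unfolding simple_graph_def by blast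
    then have "gdist V E (f a) u \<noteq> 1" using gdist_eq_1_iff[OF conn \<open>f a \<in> V\<close> u] by blast
    have "set_dist V E v {u} \<noteq> set_dist V E w {u}"
      using \<open>gdist V E a u = 1\<close> \<open>gdist V E (f a) u \<noteq> 1\<close> a(2) \<open>v \<in> S\<close> \<open>w \<in> S\<close> \<open>v \<noteq> w\<close>
      by (auto simp: set_dist_singleton)
    then show "\<exists>T\<in>matching_partition V A f. set_dist V E v T \<noteq> set_dist V E w T"
      using uP by blast
  qed
qed

theorem partition_dim_le_card_minus_min_degree:
  assumes conn: "connected_graph V E" and "u \<in> V"
  shows "partition_dim V E \<le> card V - min (degree V E u) (card V - 1 - degree V E u)"
proof -
  have sg: "simple_graph V E" using conn by (simp add: connected_graph_def)
  then have fin: "finite V" by (simp add: simple_graph_def)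
  define N where "N = {v \<in> V. E u v}"
  define M where "M = V - insert u N"
  define k where "k = min (degree V E u) (card V - 1 - degree V E u)"
  have "u \<notin> N" using sg by (simp add: N_def simple_graph_def)
  then have "card M = card V - 1 - degree V E u"
    using fin \<open>u \<in> V\<close> by (simp add: M_def N_def degree_def card_Diff_subset)
  then have "k \<le> card N" "k \<le> card M" by (simp_all add: k_def N_def degree_def)
  then obtain A B where A: "A \<subseteq> N" "card A = k" and B: "B \<subseteq> M" "card B = k"
    by (metis obtain_subset_with_card_n)
  moreover have "finite A" "finite B"
    using A(1) B(1) fin by (auto simp: N_def M_def intro: finite_subset)
  ultimately obtain f where "bij_betw f A B"
    by (metis finite_same_card_bij)
  then have "f ` A \<subseteq> M" "inj_on f A" using B by (auto simp: bij_betw_def)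
  then have "locating_partition V E (matching_partition V A f)"
    using locating_matching_partition[OF conn \<open>u \<in> V\<close>] A by (simp add: N_def M_def)
  moreover have "card (matching_partition V A f) = card V - k"
    using A \<open>f ` A \<subseteq> M\<close> \<open>inj_on f A\<close>
    by (subst card_matching_partition[OF fin]) (auto simp: N_def M_def)
  ultimately show ?thesis unfolding k_def using partition_dim_le by metis
qed

theorem corollary11:
  fixes V :: "'a set" and E :: "'a \<Rightarrow> 'a \<Rightarrow> bool" and n :: nat
  assumes "connected_graph V E"
    and "card V = n" and "n \<ge> 7"
    and "\<exists>u\<in>V. 3 \<le> degree V E u \<and> degree V E u \<le> n - 4"
  shows "partition_dim V E \<le> n - 3"
proof -
  obtain u where "u \<in> V" "3 \<le> degree V E u" "degree V E u \<le> n - 4"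
    using assms(4) by blast
  then have "3 \<le> min (degree V E u) (card V - 1 - degree V E u)"
    using assms(2,3) by simp
  then show ?thesis
    using partition_dim_le_card_minus_min_degree[OF assms(1) \<open>u \<in> V\<close>] assms(2) by linarith
qed

end
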